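(* Let $V$ be a finite ground set, $Y$ a finite state set, $p$ a prior over $\Phi_V$, and $f_p$ the coverage utility function. Let $\pi^*$ be a policy such that $f_p(E(\pi^*,\phi),\phi)=1$ for all $\phi\in\Phi_V$ and such that $c_{\mathrm{avg}}(\pi^*,p)$ is minimal (among all policies with this property). Then the height of $\pi^*$ is at most $|\Phi_V|$.
   Context: A realization is a map $\phi:V\to Y$; $\Phi_V$ is the set of realizations. A partial realization $\psi$ maps $\mathrm{dom}(\psi)\subseteq V$ to $Y$; $\phi\sim\psi$ means agreement on $\mathrm{dom}(\psi)$. The version space of $\psi$ is $\mathrm{VS}(\psi)=\{\phi\in\Phi_V:\phi\sim\psi\}$; for $A\subseteq V$, $\mathrm{VS}_{A,\phi}=\mathrm{VS}(\{(x,\phi(x)):x\in A\})$; $p(\mathcal{H})=\sum_{\phi\in\mathcal{H}}p(\phi)$. The coverage utility function is $f_p(A,\phi)=1-p(\mathrm{VS}_{A,\phi})+p(\phi)$. A (possibly randomized) policy maps the observed partial realization to the next element to select (observing its state) or $\bot$ (terminate); $E(\pi,\phi)$ is the set of elements selected under $\phi$; the height of $\pi$ is the maximum number of elements it may select over all realizations and random bits; $c_{\mathrm{avg}}(\pi,p)=\mathbb{E}_{\phi\sim p}[|E(\pi,\phi)|]$ (also over the policy's randomness). *)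

theory Defs
  imports "HOL-Probability.Probability_Mass_Function"
begin

text \<open>Realizations are maps 'v \<Rightarrow> 'y; the set of realizations Phi_V is a finite set H.
  Partial realizations are partial maps 'v \<rightharpoonup> 'y (domain = observed elements).\<close>

type_synonym ('v, 'y) det_policy = "('v \<rightharpoonup> 'y) \<Rightarrow> 'v option"
  \<comment> \<open>None = terminate (bottom), Some x = select x\<close>

definition consistent :: "('v \<Rightarrow> 'y) \<Rightarrow> ('v \<rightharpoonup> 'y) \<Rightarrow> bool" where
  "consistent \<phi> \<psi> \<longleftrightarrow> (\<forall>x\<in>dom \<psi>. \<psi> x = Some (\<phi> x))"

definition VS :: "('v \<Rightarrow> 'y) set \<Rightarrow> ('v \<rightharpoonup> 'y) \<Rightarrow> ('v \<Rightarrow> 'y) set" where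
  "VS H \<psi> = {\<phi> \<in> H. consistent \<phi> \<psi>}"

definition partial_of :: "'v set \<Rightarrow> ('v \<Rightarrow> 'y) \<Rightarrow> ('v \<rightharpoonup> 'y)" where
  "partial_of A \<phi> = (\<lambda>x. if x \<in> A then Some (\<phi> x) else None)"

definition VS_A :: "('v \<Rightarrow> 'y) set \<Rightarrow> 'v set \<Rightarrow> ('v \<Rightarrow> 'y) \<Rightarrow> ('v \<Rightarrow> 'y) set" where
  "VS_A H A \<phi> = VS H (partial_of A \<phi>)"

definition coverage :: "('v \<Rightarrow> 'y) set \<Rightarrow> (('v \<Rightarrow> 'y) \<Rightarrow> real) \<Rightarrow> 'v set \<Rightarrow> ('v \<Rightarrow> 'y) \<Rightarrow> real" where
  "coverage H p A \<phi> = 1 - (\<Sum>\<phi>'\<in>VS_A H A \<phi>. p \<phi>') + p \<phi>"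

definition step :: "('v, 'y) det_policy \<Rightarrow> ('v \<Rightarrow> 'y) \<Rightarrow> ('v \<rightharpoonup> 'y) \<Rightarrow> ('v \<rightharpoonup> 'y)" where
  "step d \<phi> \<psi> = (case d \<psi> of None \<Rightarrow> \<psi> | Some x \<Rightarrow> \<psi>(x \<mapsto> \<phi> x))"

definition run_state :: "('v, 'y) det_policy \<Rightarrow> ('v \<Rightarrow> 'y) \<Rightarrow> nat \<Rightarrow> ('v \<rightharpoonup> 'y)" where
  "run_state d \<phi> n = (step d \<phi> ^^ n) Map.empty"

definition terminates :: "('v, 'y) det_policy \<Rightarrow> ('v \<Rightarrow> 'y) \<Rightarrow> bool" where
  "terminates d \<phi> \<longleftrightarrow> (\<exists>n. d (run_state d \<phi> n) = None)"

text \<open>E(d, phi): the set of elements selected when running d under phi (until termination).\<close>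
definition sel :: "('v, 'y) det_policy \<Rightarrow> ('v \<Rightarrow> 'y) \<Rightarrow> 'v set" where
  "sel d \<phi> = dom (run_state d \<phi> (LEAST n. d (run_state d \<phi> n) = None))"

text \<open>A randomized policy is a distribution over deterministic policies (the random bits).\<close>
type_synonym ('v, 'y) rpolicy = "('v, 'y) det_policy pmf"

definition covers :: "('v \<Rightarrow> 'y) set \<Rightarrow> (('v \<Rightarrow> 'y) \<Rightarrow> real) \<Rightarrow> ('v, 'y) rpolicy \<Rightarrow> bool" where
  "covers H p \<pi> \<longleftrightarrow> (\<forall>d\<in>set_pmf \<pi>. \<forall>\<phi>\<in>H. terminates d \<phi> \<and> coverage H p (sel d \<phi>) \<phi> = 1)"

definition c_avg :: "('v \<Rightarrow> 'y) set \<Rightarrow> (('v \<Rightarrow> 'y) \<Rightarrow> real) \<Rightarrow> ('v, 'y) rpolicy \<Rightarrow> real" where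
  "c_avg H p \<pi> = (\<Sum>\<phi>\<in>H. p \<phi> * measure_pmf.expectation \<pi> (\<lambda>d. real (card (sel d \<phi>))))"

definition height :: "('v \<Rightarrow> 'y) set \<Rightarrow> ('v, 'y) rpolicy \<Rightarrow> nat" where
  "height H \<pi> = Sup {card (sel d \<phi>) | d \<phi>. d \<in> set_pmf \<pi> \<and> \<phi> \<in> H}"

end

theory Submission
  imports Defs
begin

text \<open>If an optimal policy ever selected more than |H| elements, pruning each of its
  deterministic components would strictly lower the expected cost. The pruned policy, seeing
  the version space K, selects the first element of the run of d that separates K, and stops
  when there is none. Each selection then shrinks K, which always contains the true
  realization, so fewer than |H| elements are selected; only elements that d selects are
  selected; and the final version space is still a singleton, because each of its members
  agrees with the true realization on every element selected by d.\<close>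

lemma run_state_0 [simp]: "run_state d \<phi> 0 = Map.empty"
  by (simp add: run_state_def)

lemma run_state_Suc [simp]: "run_state d \<phi> (Suc n) = step d \<phi> (run_state d \<phi> n)"
  by (simp add: run_state_def)

lemma run_state_consistent: "consistent \<phi> (run_state d \<phi> n)"
  by (induction n) (auto simp: consistent_def step_def split: option.splits)

lemma in_VS_run_state: "\<phi> \<in> H \<Longrightarrow> \<phi> \<in> VS H (run_state d \<phi> n)"
  by (simp add: VS_def run_state_consistent)

lemma dom_run_state_Suc:
  "dom (run_state d \<phi> (Suc n)) = dom (run_state d \<phi> n) \<union> set_option (d (run_state d \<phi> n))"
  by (auto simp: step_def split: option.splits)

lemma mem_dom_run_state:
  "x \<in> dom (run_state d \<phi> n) \<longleftrightarrow> (\<exists>j<n. d (run_state d \<phi> j) = Some x)"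
  by (induction n) (auto simp only: dom_run_state_Suc less_Suc_eq, auto)

lemma card_dom_run_state_le: "card (dom (run_state d \<phi> n)) \<le> n"
proof -
  have "dom (run_state d \<phi> n) \<subseteq> (\<lambda>j. the (d (run_state d \<phi> j))) ` {..<n}"
  proof
    fix x assume "x \<in> dom (run_state d \<phi> n)"
    then obtain j where "j < n" "d (run_state d \<phi> j) = Some x"
      by (auto simp: mem_dom_run_state)
    then show "x \<in> (\<lambda>j. the (d (run_state d \<phi> j))) ` {..<n}" by force
  qed
  then show ?thesis
    by (metis card_image_le card_lessThan finite_imageI finite_lessThan card_mono le_trans)
qed

lemma run_state_stable:
  "d (run_state d \<phi> m) = None \<Longrightarrow> m \<le> n \<Longrightarrow> run_state d \<phi> n = run_state d \<phi> m"
  by (induction n) (auto simp: step_def le_Suc_eq)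

lemma run_state_cong:
  "(\<And>j x. j < n \<Longrightarrow> d (run_state d a j) = Some x \<Longrightarrow> a x = b x) \<Longrightarrow>
   run_state d a n = run_state d b n"
proof (induction n)
  case (Suc n)
  then have "run_state d a n = run_state d b n" using less_SucI by blast
  with Suc.prems[of n] show ?case by (auto simp: step_def split: option.splits)
qed simp

lemma mem_sel_iff:
  assumes "terminates d \<phi>"
  shows "x \<in> sel d \<phi> \<longleftrightarrow> (\<exists>n. d (run_state d \<phi> n) = Some x)"
proof
  assume "x \<in> sel d \<phi>"
  then show "\<exists>n. d (run_state d \<phi> n) = Some x"
    unfolding sel_def mem_dom_run_state by blast
next
  define M where "M = (LEAST n. d (run_state d \<phi> n) = None)"
  have M: "d (run_state d \<phi> M) = None"
    using assms unfolding terminates_def M_def by (rule LeastI_ex)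
  assume "\<exists>n. d (run_state d \<phi> n) = Some x"
  then obtain n where n: "d (run_state d \<phi> n) = Some x" ..
  have "n < M"
    using run_state_stable[of d \<phi> M n] M n by (cases "n < M") auto
  with n show "x \<in> sel d \<phi>"
    unfolding sel_def M_def[symmetric] mem_dom_run_state by blast
qed

lemma card_sel_le: "d (run_state d \<phi> n) = None \<Longrightarrow> card (sel d \<phi>) \<le> n"
  unfolding sel_def by (meson Least_le card_dom_run_state_le le_trans)

lemma mem_VS_A_iff: "\<phi>' \<in> VS_A H A \<phi> \<longleftrightarrow> \<phi>' \<in> H \<and> (\<forall>x\<in>A. \<phi>' x = \<phi> x)"
proof -
  have "dom (partial_of A \<phi>) = A"
    by (auto simp: partial_of_def split: if_splits)
  then show ?thesis
    by (auto simp: VS_A_def VS_def consistent_def partial_of_def)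
qed

lemma VS_A_dom: "consistent \<phi> \<psi> \<Longrightarrow> VS_A H (dom \<psi>) \<phi> = VS H \<psi>"
  by (auto simp: mem_VS_A_iff VS_def consistent_def domIff)

lemma coverage_eq_1_iff:
  assumes "finite H" "\<forall>\<phi>'\<in>H. p \<phi>' > 0" "\<phi> \<in> H"
  shows "coverage H p A \<phi> = 1 \<longleftrightarrow> VS_A H A \<phi> = {\<phi>}"
proof -
  let ?K = "VS_A H A \<phi>"
  have K: "finite ?K" "?K \<subseteq> H" "\<phi> \<in> ?K"
    using assms by (auto simp: mem_VS_A_iff intro: finite_subset)
  then have "coverage H p A \<phi> = 1 - (\<Sum>\<phi>'\<in>?K - {\<phi>}. p \<phi>')"
    by (simp add: coverage_def sum.remove)
  also have "\<dots> = 1 \<longleftrightarrow> (\<forall>\<phi>'\<in>?K - {\<phi>}. p \<phi>' = 0)"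
    using K assms(2) by (subst sum_nonneg_eq_0_iff[symmetric]) (auto intro: less_imp_le)
  also have "\<dots> \<longleftrightarrow> ?K = {\<phi>}"
    using K assms(2) by force
  finally show ?thesis .
qed

lemma VS_fun_upd_psubset:
  assumes "\<phi> \<in> VS H \<psi>" and "\<exists>c\<in>VS H \<psi>. c x \<noteq> \<phi> x"
  shows "VS H (\<psi>(x \<mapsto> \<phi> x)) \<subset> VS H \<psi>"
proof -
  obtain c where c: "c \<in> VS H \<psi>" "c x \<noteq> \<phi> x" using assms(2) ..
  have "e \<in> VS H \<psi>" if "e \<in> VS H (\<psi>(x \<mapsto> \<phi> x))" for e
    using that assms(1) by (auto simp: VS_def consistent_def split: if_splits)
  moreover have "c \<notin> VS H (\<psi>(x \<mapsto> \<phi> x))"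
    using c(2) by (auto simp: VS_def consistent_def)
  ultimately show ?thesis using c(1) by blast
qed

lemma shrinking_policy_terminates:
  assumes "finite H" "\<phi> \<in> H"
    and shrink: "\<And>\<psi> x. d \<psi> = Some x \<Longrightarrow> \<phi> \<in> VS H \<psi> \<Longrightarrow> VS H (\<psi>(x \<mapsto> \<phi> x)) \<subset> VS H \<psi>"
  shows "\<exists>n<card H. d (run_state d \<phi> n) = None"
proof -
  have budget: "card (VS H (run_state d \<phi> n)) + n \<le> card H"
    if "\<forall>j<n. d (run_state d \<phi> j) \<noteq> None" for n
    using that
  proof (induction n)
    case 0
    show ?case using \<open>finite H\<close> by (simp add: VS_def card_mono)
  next
    case (Suc n)
    then obtain x where x: "d (run_state d \<phi> n) = Some x" by auto
    have "VS H (run_state d \<phi> (Suc n)) \<subset> VS H (run_state d \<phi> n)"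
      using shrink[OF x in_VS_run_state[OF \<open>\<phi> \<in> H\<close>]] x by (simp add: step_def)
    then have "card (VS H (run_state d \<phi> (Suc n))) < card (VS H (run_state d \<phi> n))"
      using \<open>finite H\<close> by (intro psubset_card_mono) (simp_all add: VS_def)
    with Suc show ?case by simp
  qed
  have "card (VS H (run_state d \<phi> (card H))) > 0"
    using \<open>finite H\<close> in_VS_run_state[OF \<open>\<phi> \<in> H\<close>] by (auto simp: VS_def card_gt_0_iff)
  then show ?thesis using budget[of "card H"] by force
qed

definition separating :: "('v \<Rightarrow> 'y) set \<Rightarrow> 'v \<Rightarrow> bool" where
  "separating K x \<longleftrightarrow> (\<exists>a\<in>K. \<exists>b\<in>K. a x \<noteq> b x)"

text \<open>Until it queries an element separating the version space, the run of a deterministic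
  policy is the same under all realizations in that space; so the pruned policy may simulate
  it under an arbitrary representative.\<close>

definition prune :: "('v \<Rightarrow> 'y) set \<Rightarrow> ('v, 'y) det_policy \<Rightarrow> ('v, 'y) det_policy" where
  "prune H d \<psi> = (let K = VS H \<psi>; \<phi>\<^sub>0 = (SOME \<phi>. \<phi> \<in> K);
     Q = (\<lambda>n. \<exists>x. d (run_state d \<phi>\<^sub>0 n) = Some x \<and> separating K x) in
     if \<exists>n. Q n then d (run_state d \<phi>\<^sub>0 (LEAST n. Q n)) else None)"

lemma run_state_eq_before_separating:
  assumes "a \<in> K" "b \<in> K"
    and "\<forall>j<n. \<forall>x. d (run_state d a j) = Some x \<longrightarrow> \<not> separating K x"
  shows "run_state d a n = run_state d b n"
  by (rule run_state_cong) (use assms in \<open>auto simp: separating_def\<close>)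

lemma prune_SomeD:
  assumes "prune H d \<psi> = Some x" "\<phi> \<in> VS H \<psi>"
  shows "separating (VS H \<psi>) x \<and> (\<exists>n. d (run_state d \<phi> n) = Some x)"
proof -
  define K where "K = VS H \<psi>"
  define \<phi>\<^sub>0 where "\<phi>\<^sub>0 = (SOME \<phi>. \<phi> \<in> K)"
  define Q where "Q = (\<lambda>n. \<exists>x. d (run_state d \<phi>\<^sub>0 n) = Some x \<and> separating K x)"
  have prune_eq: "prune H d \<psi> = (if \<exists>n. Q n then d (run_state d \<phi>\<^sub>0 (LEAST n. Q n)) else None)"
    unfolding prune_def K_def \<phi>\<^sub>0_def Q_def Let_def ..
  have "\<phi>\<^sub>0 \<in> K"
    using assms(2) unfolding K_def \<phi>\<^sub>0_def by (rule someI[where P = "\<lambda>\<phi>. \<phi> \<in> VS H \<psi>"])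
  have "\<exists>n. Q n" using assms(1) prune_eq by (auto split: if_splits)
  define m where "m = (LEAST n. Q n)"
  have "Q m" unfolding m_def using \<open>\<exists>n. Q n\<close> by (rule LeastI_ex)
  have first: "\<forall>j<m. \<not> Q j" unfolding m_def using not_less_Least by blast
  have x: "d (run_state d \<phi>\<^sub>0 m) = Some x"
    using assms(1) \<open>\<exists>n. Q n\<close> prune_eq m_def by simp
  have "run_state d \<phi>\<^sub>0 m = run_state d \<phi> m"
    using run_state_eq_before_separating[OF \<open>\<phi>\<^sub>0 \<in> K\<close>, of \<phi> m d] first assms(2)
    by (auto simp: K_def Q_def)
  then show ?thesis using \<open>Q m\<close> x by (auto simp: K_def Q_def)
qed

lemma prune_NoneD:
  assumes "prune H d \<psi> = None" "\<phi> \<in> VS H \<psi>" "d (run_state d \<phi> n) = Some x"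
  shows "\<not> separating (VS H \<psi>) x"
proof -
  define K where "K = VS H \<psi>"
  define \<phi>\<^sub>0 where "\<phi>\<^sub>0 = (SOME \<phi>. \<phi> \<in> K)"
  define Q where "Q = (\<lambda>n. \<exists>x. d (run_state d \<phi>\<^sub>0 n) = Some x \<and> separating K x)"
  have prune_eq: "prune H d \<psi> = (if \<exists>n. Q n then d (run_state d \<phi>\<^sub>0 (LEAST n. Q n)) else None)"
    unfolding prune_def K_def \<phi>\<^sub>0_def Q_def Let_def ..
  have "\<phi>\<^sub>0 \<in> K"
    using assms(2) unfolding K_def \<phi>\<^sub>0_def by (rule someI[where P = "\<lambda>\<phi>. \<phi> \<in> VS H \<psi>"])
  have never: "\<not> Q j" for j
  proof
    assume "Q j"
    then have "Q (LEAST n. Q n)" by (rule LeastI)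
    moreover have "d (run_state d \<phi>\<^sub>0 (LEAST n. Q n)) = None"
      using assms(1) \<open>Q j\<close> prune_eq by (auto split: if_splits)
    moreover have "\<not> Q k" if "d (run_state d \<phi>\<^sub>0 k) = None" for k
      using that by (simp add: Q_def)
    ultimately show False by blast
  qed
  then have "run_state d \<phi>\<^sub>0 n = run_state d \<phi> n"
    using run_state_eq_before_separating[OF \<open>\<phi>\<^sub>0 \<in> K\<close>, of \<phi> n d] assms(2)
    by (auto simp: K_def Q_def)
  then show ?thesis using never[of n] assms(3) by (auto simp: K_def Q_def)
qed

lemma prune_terminates_before_card:
  assumes "finite H" "\<phi> \<in> H"
  shows "\<exists>n<card H. prune H d (run_state (prune H d) \<phi> n) = None"
proof (rule shrinking_policy_terminates[OF assms])
  fix \<psi> x assume "prune H d \<psi> = Some x" "\<phi> \<in> VS H \<psi>"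
  then have "separating (VS H \<psi>) x" by (blast dest: prune_SomeD)
  then have "\<exists>c\<in>VS H \<psi>. c x \<noteq> \<phi> x" unfolding separating_def by metis
  with \<open>\<phi> \<in> VS H \<psi>\<close> show "VS H (\<psi>(x \<mapsto> \<phi> x)) \<subset> VS H \<psi>" by (rule VS_fun_upd_psubset)
qed

lemma terminates_prune: "finite H \<Longrightarrow> \<phi> \<in> H \<Longrightarrow> terminates (prune H d) \<phi>"
  unfolding terminates_def using prune_terminates_before_card by blast

lemma card_sel_prune_less: "finite H \<Longrightarrow> \<phi> \<in> H \<Longrightarrow> card (sel (prune H d) \<phi>) < card H"
  by (meson prune_terminates_before_card card_sel_le le_less_trans)

lemma sel_prune_subset:
  assumes "finite H" "\<phi> \<in> H" "terminates d \<phi>"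
  shows "sel (prune H d) \<phi> \<subseteq> sel d \<phi>"
proof
  fix x assume "x \<in> sel (prune H d) \<phi>"
  then obtain n where "prune H d (run_state (prune H d) \<phi> n) = Some x"
    using mem_sel_iff[OF terminates_prune[OF assms(1,2)]] by blast
  then obtain m where "d (run_state d \<phi> m) = Some x"
    using prune_SomeD[OF _ in_VS_run_state[OF assms(2)]] by blast
  then show "x \<in> sel d \<phi>" using mem_sel_iff[OF assms(3)] by blast
qed

lemma coverage_prune:
  assumes "finite H" "\<forall>\<phi>'\<in>H. p \<phi>' > 0" "\<phi> \<in> H"
    and "terminates d \<phi>" "coverage H p (sel d \<phi>) \<phi> = 1"
  shows "coverage H p (sel (prune H d) \<phi>) \<phi> = 1"
proof -
  define N where "N = (LEAST n. prune H d (run_state (prune H d) \<phi> n) = None)"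
  let ?\<psi> = "run_state (prune H d) \<phi> N"
  have stop: "prune H d ?\<psi> = None"
    using terminates_prune[OF assms(1,3)] unfolding terminates_def N_def by (rule LeastI_ex)
  have \<phi>: "\<phi> \<in> VS H ?\<psi>" using assms(3) by (rule in_VS_run_state)
  have "VS H ?\<psi> \<subseteq> VS_A H (sel d \<phi>) \<phi>"
  proof
    fix b assume b: "b \<in> VS H ?\<psi>"
    have "b x = \<phi> x" if "x \<in> sel d \<phi>" for x
    proof -
      obtain n where "d (run_state d \<phi> n) = Some x"
        using \<open>x \<in> sel d \<phi>\<close> mem_sel_iff[OF assms(4)] by blast
      then have "\<not> separating (VS H ?\<psi>) x" by (rule prune_NoneD[OF stop \<phi>])
      with b \<phi> show ?thesis by (auto simp: separating_def)
    qed
    with b show "b \<in> VS_A H (sel d \<phi>) \<phi>" by (auto simp: mem_VS_A_iff VS_def)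
  qed
  also have "\<dots> = {\<phi>}" using assms(5) coverage_eq_1_iff[OF assms(1-3)] by blast
  finally have "VS H ?\<psi> = {\<phi>}" using \<phi> by blast
  moreover have "VS_A H (sel (prune H d) \<phi>) \<phi> = VS H ?\<psi>"
    unfolding sel_def N_def[symmetric] by (rule VS_A_dom[OF run_state_consistent])
  ultimately show ?thesis using coverage_eq_1_iff[OF assms(1-3)] by simp
qed

lemma covers_map_pmf_prune:
  assumes "finite H" "\<forall>\<phi>\<in>H. p \<phi> > 0" "covers H p \<pi>"
  shows "covers H p (map_pmf (prune H) \<pi>)"
  unfolding covers_def
proof (intro ballI conjI)
  fix d' \<phi> assume "d' \<in> set_pmf (map_pmf (prune H) \<pi>)" "\<phi> \<in> H"
  moreover from this obtain d where "d \<in> set_pmf \<pi>" "d' = prune H d" by auto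
  ultimately show "terminates d' \<phi>" "coverage H p (sel d' \<phi>) \<phi> = 1"
    using assms(3) terminates_prune[OF assms(1)] coverage_prune[OF assms(1,2)]
    by (auto simp: covers_def)
qed

lemma c_avg_map_pmf_less:
  fixes \<pi> :: "('v::finite, 'y) rpolicy"
  assumes "finite H" "\<forall>\<phi>\<in>H. p \<phi> > 0"
    and le: "\<And>d \<phi>. d \<in> set_pmf \<pi> \<Longrightarrow> \<phi> \<in> H \<Longrightarrow> card (sel (f d) \<phi>) \<le> card (sel d \<phi>)"
    and less: "d\<^sub>0 \<in> set_pmf \<pi>" "\<phi>\<^sub>0 \<in> H" "card (sel (f d\<^sub>0) \<phi>\<^sub>0) < card (sel d\<^sub>0 \<phi>\<^sub>0)"
  shows "c_avg H p (map_pmf f \<pi>) < c_avg H p \<pi>"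
proof -
  define E :: "(('v, 'y) det_policy \<Rightarrow> ('v, 'y) det_policy) \<Rightarrow> ('v \<Rightarrow> 'y) \<Rightarrow> real"
    where "E = (\<lambda>g \<phi>. measure_pmf.expectation \<pi> (\<lambda>d. real (card (sel (g d) \<phi>))))"
  have int: "integrable (measure_pmf \<pi>) (\<lambda>d. real (card (sel (g d) \<phi>)))"
    for g :: "('v, 'y) det_policy \<Rightarrow> ('v, 'y) det_policy" and \<phi>
    by (rule measure_pmf.integrable_const_bound[where B = "real (card (UNIV :: 'v set))"])
      (auto intro!: AE_pmfI card_mono)
  have "E f \<phi> \<le> E (\<lambda>d. d) \<phi>" if "\<phi> \<in> H" for \<phi>
    unfolding E_def using le that by (intro integral_mono_AE int AE_pmfI) simp
  moreover have "E f \<phi>\<^sub>0 < E (\<lambda>d. d) \<phi>\<^sub>0"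
    unfolding E_def
  proof (rule measure_pmf.integral_less_AE[OF int int, where A = "{d\<^sub>0}"])
    show "emeasure (measure_pmf \<pi>) {d\<^sub>0} \<noteq> 0"
      using less(1) by (simp add: emeasure_pmf_single_eq_zero_iff)
  qed (use le less in \<open>auto intro!: AE_pmfI\<close>)
  ultimately have "(\<Sum>\<phi>\<in>H. p \<phi> * E f \<phi>) < (\<Sum>\<phi>\<in>H. p \<phi> * E (\<lambda>d. d) \<phi>)"
    using assms(1,2) less(2)
    by (intro sum_strict_mono_ex1) (auto intro: mult_left_mono mult_strict_left_mono less_imp_le)
  then show ?thesis by (simp add: c_avg_def E_def)
qed

lemma height_le:
  assumes "\<And>d \<phi>. d \<in> set_pmf \<pi> \<Longrightarrow> \<phi> \<in> H \<Longrightarrow> card (sel d \<phi>) \<le> n"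
  shows "height H \<pi> \<le> n"
proof (cases "H = {}")
  case False
  then show ?thesis
    unfolding height_def using assms set_pmf_not_empty[of \<pi>] by (intro cSup_least) auto
qed (simp add: height_def)

theorem lemma11:
  fixes H :: "('v::finite \<Rightarrow> 'y::finite) set"
    and p :: "('v \<Rightarrow> 'y) \<Rightarrow> real"
    and \<pi>s :: "('v, 'y) rpolicy"
  assumes prior_pos: "\<forall>\<phi>\<in>H. p \<phi> > 0"
    and prior_sum: "(\<Sum>\<phi>\<in>H. p \<phi>) = 1"
    and cov: "covers H p \<pi>s"
    and opt: "\<forall>\<pi>. covers H p \<pi> \<longrightarrow> c_avg H p \<pi>s \<le> c_avg H p \<pi>"
  shows "height H \<pi>s \<le> card H"
proof (rule height_le)
  have "finite H" by simp
  fix d \<phi> assume d: "d \<in> set_pmf \<pi>s" and \<phi>: "\<phi> \<in> H"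
  show "card (sel d \<phi>) \<le> card H"
  proof (rule ccontr)
    assume "\<not> card (sel d \<phi>) \<le> card H"
    then have "card (sel (prune H d) \<phi>) < card (sel d \<phi>)"
      using card_sel_prune_less[OF \<open>finite H\<close> \<phi>, of d] by linarith
    moreover have "card (sel (prune H d') \<phi>') \<le> card (sel d' \<phi>')"
      if "d' \<in> set_pmf \<pi>s" "\<phi>' \<in> H" for d' \<phi>'
      using cov that sel_prune_subset[OF \<open>finite H\<close>] by (simp add: covers_def card_mono)
    ultimately have "c_avg H p (map_pmf (prune H) \<pi>s) < c_avg H p \<pi>s"
      using c_avg_map_pmf_less[OF \<open>finite H\<close> prior_pos] d \<phi> by blast
    moreover have "covers H p (map_pmf (prune H) \<pi>s)"
      using covers_map_pmf_prune[OF \<open>finite H\<close> prior_pos cov] .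
    ultimately show False using opt by force
  qed
qed

end
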